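(* Let $H\in\mathfrak a$. For $\varepsilon\in\mathrm U(1)$ put $\Sigma_{\varepsilon,H}=\{\alpha\in\Sigma_\varepsilon:\langle\alpha,H\rangle+\varphi_\varepsilon\in\pi\mathbb Z\}$ and $\tilde\Sigma_H=\bigcup_{\varepsilon\in\mathrm U(1)}\Sigma_{\varepsilon,H}$. If $\tilde\Sigma_H\ne\emptyset$, then $\tilde\Sigma_H$ is a root system of $\mathrm{Span}(\tilde\Sigma_H)\subset\mathfrak a$.
   Context: Let $G$ be a compact connected semisimple Lie group with Lie algebra $\mathfrak g$, and let $\theta_1,\theta_2$ be involutive automorphisms of $G$ with $(\theta_1\theta_2)^l=\mathrm{id}_G$ for some positive integer $l$; induced involutions on $\mathfrak g,\mathfrak g^{\mathbb C}$ are also denoted $\theta_i$. $\mathfrak m_i=\{X\in\mathfrak g:\theta_iX=-X\}$. Fix an $\mathrm{Ad}(G)$-invariant inner product $\langle\cdot,\cdot\rangle$ on $\mathfrak g$. Let $\mathfrak a$ be a maximal abelian subspace of $\mathfrak m_1\cap\mathfrak m_2$, vectors identified with linear forms via $\langle\cdot,\cdot\rangle$. For $\alpha\in\mathfrak a$, $\varepsilon\in\mathrm U(1)$: $\mathfrak g(\alpha)=\{X\in\mathfrak g^{\mathbb C}:[H,X]=\sqrt{-1}\langle\alpha,H\rangle X\ \forall H\in\mathfrak a\}$, $\mathfrak g(\alpha,\varepsilon)=\{X\in\mathfrak g(\alpha):\theta_1\theta_2X=\varepsilon X\}$, $\Sigma_\varepsilon=\{\alpha\in\mathfrak a\setminus\{0\}:\mathfrak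 g(\alpha,\varepsilon)\ne0\}$, and $\varphi_\varepsilon\in(-\pi/2,\pi/2]$ with $\varepsilon=e^{2\sqrt{-1}\varphi_\varepsilon}$. *)

theory Defs
  imports "HOL-Analysis.Analysis"
begin

definition lie_algebra :: "('g::euclidean_space \<Rightarrow> 'g \<Rightarrow> 'g) \<Rightarrow> bool" where
  "lie_algebra br \<longleftrightarrow> bilinear br \<and> (\<forall>X. br X X = 0) \<and>
     (\<forall>X Y Z. br X (br Y Z) + br Y (br Z X) + br Z (br X Y) = 0)"

text \<open>Killing form B(X,Y) = tr(ad X ad Y), trace computed in an orthonormal basis.\<close>
definition killing_form :: "('g::euclidean_space \<Rightarrow> 'g \<Rightarrow> 'g) \<Rightarrow> 'g \<Rightarrow> 'g \<Rightarrow> real" where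
  "killing_form br X Y = (\<Sum>b\<in>Basis. inner (br X (br Y b)) b)"

text \<open>Semisimple: nondegenerate Killing form (Cartan's criterion).\<close>
definition semisimple_lie_algebra :: "('g::euclidean_space \<Rightarrow> 'g \<Rightarrow> 'g) \<Rightarrow> bool" where
  "semisimple_lie_algebra br \<longleftrightarrow> lie_algebra br \<and>
     (\<forall>X. (\<forall>Y. killing_form br X Y = 0) \<longrightarrow> X = 0)"

text \<open>The inner product of 'g is ad-invariant (infinitesimal Ad(G)-invariance).\<close>
definition ad_invariant_inner :: "('g::euclidean_space \<Rightarrow> 'g \<Rightarrow> 'g) \<Rightarrow> bool" where
  "ad_invariant_inner br \<longleftrightarrow> (\<forall>X Y Z. inner (br X Y) Z + inner Y (br X Z) = 0)"

definition lie_automorphism :: "('g::euclidean_space \<Rightarrow> 'g \<Rightarrow> 'g) \<Rightarrow> ('g \<Rightarrow> 'g) \<Rightarrow> bool" where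
  "lie_automorphism br \<theta> \<longleftrightarrow> linear \<theta> \<and> bij \<theta> \<and> (\<forall>X Y. \<theta> (br X Y) = br (\<theta> X) (\<theta> Y))"

definition involutive_automorphism :: "('g::euclidean_space \<Rightarrow> 'g \<Rightarrow> 'g) \<Rightarrow> ('g \<Rightarrow> 'g) \<Rightarrow> bool" where
  "involutive_automorphism br \<theta> \<longleftrightarrow> lie_automorphism br \<theta> \<and> (\<forall>X. \<theta> (\<theta> X) = X)"

definition minus_space :: "('g::real_vector \<Rightarrow> 'g) \<Rightarrow> 'g set" where
  "minus_space \<theta> = {X. \<theta> X = - X}"

definition abelian_subspace :: "('g::euclidean_space \<Rightarrow> 'g \<Rightarrow> 'g) \<Rightarrow> 'g set \<Rightarrow> bool" where
  "abelian_subspace br a \<longleftrightarrow> subspace a \<and> (\<forall>X\<in>a. \<forall>Y\<in>a. br X Y = 0)"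

definition maximal_abelian_subspace_in ::
  "('g::euclidean_space \<Rightarrow> 'g \<Rightarrow> 'g) \<Rightarrow> 'g set \<Rightarrow> 'g set \<Rightarrow> bool" where
  "maximal_abelian_subspace_in br m a \<longleftrightarrow> abelian_subspace br a \<and> a \<subseteq> m \<and>
     (\<forall>b. abelian_subspace br b \<and> a \<subseteq> b \<and> b \<subseteq> m \<longrightarrow> b = a)"

text \<open>Complexification g^C modelled as pairs (X,Y) standing for X + sqrt(-1) Y.
  Root space g(alpha) relative to a:
  [H,Z] = sqrt(-1) <alpha,H> Z for all H in a, with [H, X + iY] = [H,X] + i[H,Y]
  and  i c (X + iY) = -cY + i cX.\<close>
definition root_space ::
  "('g::euclidean_space \<Rightarrow> 'g \<Rightarrow> 'g) \<Rightarrow> 'g set \<Rightarrow> 'g \<Rightarrow> ('g \<times> 'g) set" where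
  "root_space br a \<alpha> = {(X, Y). \<forall>H\<in>a.
      br H X = - (inner \<alpha> H) *\<^sub>R Y \<and> br H Y = (inner \<alpha> H) *\<^sub>R X}"

definition cscale :: "complex \<Rightarrow> ('g::real_vector \<times> 'g) \<Rightarrow> 'g \<times> 'g" where
  "cscale c Z = (Re c *\<^sub>R fst Z - Im c *\<^sub>R snd Z, Im c *\<^sub>R fst Z + Re c *\<^sub>R snd Z)"

text \<open>g(alpha, eps): elements of g(alpha) on which the complex-linear extension
  of theta1 theta2 acts by eps.\<close>
definition root_space_eps ::
  "('g::euclidean_space \<Rightarrow> 'g \<Rightarrow> 'g) \<Rightarrow> ('g \<Rightarrow> 'g) \<Rightarrow> ('g \<Rightarrow> 'g) \<Rightarrow> 'g set \<Rightarrow> 'g \<Rightarrow> complex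
     \<Rightarrow> ('g \<times> 'g) set" where
  "root_space_eps br \<theta>1 \<theta>2 a \<alpha> \<epsilon> =
     {Z \<in> root_space br a \<alpha>. (\<theta>1 (\<theta>2 (fst Z)), \<theta>1 (\<theta>2 (snd Z))) = cscale \<epsilon> Z}"

definition Sigma_eps ::
  "('g::euclidean_space \<Rightarrow> 'g \<Rightarrow> 'g) \<Rightarrow> ('g \<Rightarrow> 'g) \<Rightarrow> ('g \<Rightarrow> 'g) \<Rightarrow> 'g set \<Rightarrow> complex \<Rightarrow> 'g set" where
  "Sigma_eps br \<theta>1 \<theta>2 a \<epsilon> =
     {\<alpha> \<in> a - {0}. root_space_eps br \<theta>1 \<theta>2 a \<alpha> \<epsilon> \<noteq> {(0, 0)}}"

definition phi_eps :: "complex \<Rightarrow> real" where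
  "phi_eps \<epsilon> = (THE \<phi>. - (pi / 2) < \<phi> \<and> \<phi> \<le> pi / 2 \<and> \<epsilon> = exp (2 * \<i> * complex_of_real \<phi>))"

definition Sigma_eps_H ::
  "('g::euclidean_space \<Rightarrow> 'g \<Rightarrow> 'g) \<Rightarrow> ('g \<Rightarrow> 'g) \<Rightarrow> ('g \<Rightarrow> 'g) \<Rightarrow> 'g set \<Rightarrow> complex \<Rightarrow> 'g \<Rightarrow> 'g set" where
  "Sigma_eps_H br \<theta>1 \<theta>2 a \<epsilon> H =
     {\<alpha> \<in> Sigma_eps br \<theta>1 \<theta>2 a \<epsilon>. \<exists>k::int. inner \<alpha> H + phi_eps \<epsilon> = pi * of_int k}"

definition Sigma_tilde_H ::
  "('g::euclidean_space \<Rightarrow> 'g \<Rightarrow> 'g) \<Rightarrow> ('g \<Rightarrow> 'g) \<Rightarrow> ('g \<Rightarrow> 'g) \<Rightarrow> 'g set \<Rightarrow> 'g \<Rightarrow> 'g set" where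
  "Sigma_tilde_H br \<theta>1 \<theta>2 a H = (\<Union>\<epsilon>\<in>{\<epsilon>. cmod \<epsilon> = 1}. Sigma_eps_H br \<theta>1 \<theta>2 a \<epsilon> H)"

text \<open>(Possibly non-reduced) root system R of the subspace V (Bourbaki), with the
  inner product inherited from 'g.\<close>
definition root_system_of :: "'g::euclidean_space set \<Rightarrow> 'g set \<Rightarrow> bool" where
  "root_system_of V R \<longleftrightarrow> finite R \<and> R \<subseteq> V \<and> span R = V \<and> 0 \<notin> R \<and>
     (\<forall>\<alpha>\<in>R. \<forall>\<beta>\<in>R. \<beta> - (2 * inner \<beta> \<alpha> / inner \<alpha> \<alpha>) *\<^sub>R \<alpha> \<in> R) \<and>
     (\<forall>\<alpha>\<in>R. \<forall>\<beta>\<in>R. 2 * inner \<beta> \<alpha> / inner \<alpha> \<alpha> \<in> \<int>)"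

end

theory Submission
  imports Defs "HOL-Library.Real_Mod"
begin

text \<open>Fix \<alpha>, \<beta> in \<Sigma>~_H. Membership in \<Sigma>_{\<epsilon>,H} forces \<epsilon> = cis (-2 <\<alpha>,H>), and these
  phases multiply under brackets, so the H-phased root spaces are closed under the bracket of g^C.
  A nonzero vector of the phased root space of \<alpha> can be chosen fixed by the antilinear involution
  X + iY \<mapsto> \<theta>1 X - i \<theta>1 Y; by maximality of a its parts satisfy [X, Y] = -|Y|^2 \<alpha>. Hence
  E = X + iY, a multiple F of X - iY and a multiple of i\<alpha> form an sl2-triple acting on g^C.
  A nonzero vector v of the phased root space of \<beta> has weight n = 2<\<beta>,\<alpha>>/<\<alpha>,\<alpha>> for
  this triple, so n is an integer, and (ad F)^n v, respectively (ad E)^(-n) v, is a nonzero vector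
  of the phased root space of \<beta> - n\<alpha>. Finiteness holds because root vectors for distinct roots
  are linearly independent.\<close>

section \<open>The angle \<phi>_\<epsilon>\<close>

lemma exp_two_i_eq_cis: "exp (2 * \<i> * complex_of_real x) = cis (2 * x)"
  by (simp add: cis_conv_exp mult_ac)

lemma cis_two_eq_1_iff: "cis (2 * x) = 1 \<longleftrightarrow> (\<exists>k::int. x = pi * of_int k)"
proof -
  have "2 * x = of_int k * (2 * pi) \<longleftrightarrow> x = pi * of_int k" for k :: int
    by (simp add: algebra_simps)
  then show ?thesis
    by (simp add: cis_eq_1_iff)
qed

lemma phi_eps_cis:
  assumes "cmod \<epsilon> = 1"
  shows "cis (2 * phi_eps \<epsilon>) = \<epsilon>"
proof -
  define p where "p = Arg \<epsilon> / 2"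
  have "cis (2 * p) = \<epsilon>"
    using cis_Arg[of \<epsilon>] assms by (cases "\<epsilon> = 0") (auto simp: p_def sgn_div_norm)
  then have p: "- (pi / 2) < p \<and> p \<le> pi / 2 \<and> \<epsilon> = exp (2 * \<i> * complex_of_real p)"
    unfolding exp_two_i_eq_cis using Arg_bounded[of \<epsilon>] by (auto simp: p_def)
  have "phi_eps \<epsilon> = p"
    unfolding phi_eps_def
  proof (rule the_equality)
    fix q assume q: "- (pi / 2) < q \<and> q \<le> pi / 2 \<and> \<epsilon> = exp (2 * \<i> * complex_of_real q)"
    have "cis (2 * (q - p)) = 1"
      using p q assms by (auto simp: exp_two_i_eq_cis right_diff_distrib simp flip: cis_divide)
    then obtain k :: int where k: "q - p = pi * of_int k"
      using cis_two_eq_1_iff by blast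
    have "\<bar>q - p\<bar> < pi"
      using p q by linarith
    then have "\<bar>of_int k\<bar> < (1::real)"
      using k by (simp add: abs_mult)
    then have "k = 0" by linarith
    then show "q = p" using k by simp
  qed (rule p)
  then show ?thesis using p by (simp add: exp_two_i_eq_cis)
qed

lemma phase_condition_iff:
  assumes "cmod \<epsilon> = 1"
  shows "(\<exists>k::int. x + phi_eps \<epsilon> = pi * of_int k) \<longleftrightarrow> \<epsilon> = cis (- 2 * x)"
proof -
  have inverse: "cis (- 2 * x) * cis (2 * x) = 1"
    by (simp add: cis_mult)
  have "\<epsilon> = cis (- 2 * x) \<longleftrightarrow> cis (2 * x) * \<epsilon> = 1"
  proof
    assume "cis (2 * x) * \<epsilon> = 1"
    have "\<epsilon> = (cis (- 2 * x) * cis (2 * x)) * \<epsilon>"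
      by (simp only: inverse mult_1_left)
    also have "\<dots> = cis (- 2 * x)"
      by (simp only: mult.assoc \<open>cis (2 * x) * \<epsilon> = 1\<close> mult_1_right)
    finally show "\<epsilon> = cis (- 2 * x)" .
  qed (use inverse in \<open>simp only: mult.commute\<close>)
  also have "cis (2 * x) * \<epsilon> = cis (2 * (x + phi_eps \<epsilon>))"
    using phi_eps_cis[OF assms] cis_mult[of "2 * x" "2 * phi_eps \<epsilon>"] by (simp add: distrib_left)
  finally have "\<epsilon> = cis (- 2 * x) \<longleftrightarrow> (\<exists>k::int. x + phi_eps \<epsilon> = pi * of_int k)"
    by (simp only: cis_two_eq_1_iff)
  then show ?thesis
    by blast
qed

section \<open>Eigenvectors\<close>

lemma linear_funpow:
  fixes g :: "'a::real_vector \<Rightarrow> 'a"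
  shows "linear g \<Longrightarrow> linear (g ^^ k)"
proof (induction k)
  case 0
  show ?case by (simp add: linear_iff)
next
  case (Suc k)
  then show ?case using linear_compose[of "g ^^ k" g] by (simp add: o_def)
qed

lemma funpow_last_nonzero:
  assumes "(g ^^ k) v = 0" "v \<noteq> (0::'a::zero)"
  shows "\<exists>p. (g ^^ p) v \<noteq> 0 \<and> g ((g ^^ p) v) = 0"
  using assms
proof (induction k)
  case (Suc k)
  then show ?case by (cases "(g ^^ k) v = 0") auto
qed simp

lemma eigenvector_coefficient_eq_0:
  fixes B :: "'v::real_vector set"
  assumes "finite B" "independent B" "linear T"
    and "\<And>w. w \<in> B \<Longrightarrow> T w = \<mu> w *\<^sub>R w" "T x = c *\<^sub>R x" "x = (\<Sum>w\<in>B. u w *\<^sub>R w)"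
    and "w \<in> B" "\<mu> w \<noteq> c"
  shows "u w = 0"
proof -
  have "T x = (\<Sum>w\<in>B. T (u w *\<^sub>R w))"
    unfolding assms(6) by (rule linear_sum[OF assms(3)])
  also have "\<dots> = (\<Sum>w\<in>B. (\<mu> w * u w) *\<^sub>R w)"
    by (rule sum.cong) (simp_all add: linear_scale[OF assms(3)] assms(4))
  finally have Tx: "T x = (\<Sum>w\<in>B. (\<mu> w * u w) *\<^sub>R w)" .
  have cx: "c *\<^sub>R x = (\<Sum>w\<in>B. (c * u w) *\<^sub>R w)"
    unfolding assms(6) by (simp add: scaleR_sum_right)
  have "(\<Sum>w\<in>B. (u w * (\<mu> w - c)) *\<^sub>R w) = (\<Sum>w\<in>B. (\<mu> w * u w) *\<^sub>R w - (c * u w) *\<^sub>R w)"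
    by (rule sum.cong) (simp_all add: algebra_simps)
  also have "\<dots> = T x - c *\<^sub>R x"
    by (simp only: Tx cx sum_subtractf)
  also have "\<dots> = 0"
    using assms(5) by simp
  finally have sum_eq_0: "(\<Sum>w\<in>B. (u w * (\<mu> w - c)) *\<^sub>R w) = 0" .
  have "\<forall>u. (\<Sum>v\<in>B. u v *\<^sub>R v) = 0 \<longrightarrow> (\<forall>v\<in>B. u v = 0)"
    using assms(2) unfolding dependent_finite[OF assms(1)] by blast
  from this[rule_format, OF sum_eq_0 assms(7)] have "u w * (\<mu> w - c) = 0" .
  then show ?thesis
    using assms(8) by simp
qed

lemma independent_separated_eigenvectors:
  fixes S :: "'v::real_vector set" and T :: "'j \<Rightarrow> 'v \<Rightarrow> 'v"
  assumes "finite S" "0 \<notin> S" "\<And>j. j \<in> J \<Longrightarrow> linear (T j)"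
    and "\<And>j w. j \<in> J \<Longrightarrow> w \<in> S \<Longrightarrow> \<exists>c. T j w = c *\<^sub>R w"
    and "\<And>w w'. w \<in> S \<Longrightarrow> w' \<in> S \<Longrightarrow> w \<noteq> w' \<Longrightarrow>
           \<exists>j\<in>J. \<exists>c c'. T j w = c *\<^sub>R w \<and> T j w' = c' *\<^sub>R w' \<and> c \<noteq> c'"
  shows "independent S"
  using assms
proof (induction S rule: finite_induct)
  case (insert x F)
  have independent_F: "independent F"
  proof (rule insert.IH)
    show "0 \<notin> F"
      using insert.prems(1) by simp
    show "linear (T j)" if "j \<in> J" for j
      using insert.prems(2) that .
    show "\<exists>c. T j w = c *\<^sub>R w" if "j \<in> J" "w \<in> F" for j w
      using insert.prems(3) that by simp
    show "\<exists>j\<in>J. \<exists>c c'. T j w = c *\<^sub>R w \<and> T j w' = c' *\<^sub>R w' \<and> c \<noteq> c'"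
      if "w \<in> F" "w' \<in> F" "w \<noteq> w'" for w w'
      using insert.prems(4) that by simp
  qed
  have "x \<notin> span F"
  proof
    assume "x \<in> span F"
    then obtain u where x: "x = (\<Sum>w\<in>F. u w *\<^sub>R w)"
      unfolding span_finite[OF insert.hyps(1)] by blast
    have "u w = 0" if w: "w \<in> F" for w
    proof -
      have "w \<noteq> x" "w \<noteq> 0"
        using w insert.hyps(2) insert.prems(1) by auto
      then obtain j c c' where j: "j \<in> J" "T j w = c *\<^sub>R w" "T j x = c' *\<^sub>R x" "c \<noteq> c'"
        using insert.prems(4)[of w x] w by blast
      have eigen: "\<forall>w\<in>F. \<exists>c. T j w = c *\<^sub>R w"
        using insert.prems(3)[OF j(1)] by blast
      obtain \<mu> where \<mu>: "\<And>w. w \<in> F \<Longrightarrow> T j w = \<mu> w *\<^sub>R w"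
        using bchoice[OF eigen] by blast
      have "\<mu> w *\<^sub>R w = c *\<^sub>R w"
        unfolding \<mu>[OF w, symmetric] by (rule j(2))
      then have "\<mu> w \<noteq> c'"
        using \<open>w \<noteq> 0\<close> j(4) by simp
      then show ?thesis
        using eigenvector_coefficient_eq_0[OF insert.hyps(1) independent_F insert.prems(2)[OF j(1)] \<mu> j(3) x w]
        by simp
    qed
    then have "x = 0"
      using x by simp
    then show False
      using insert.prems(1) by blast
  qed
  then show ?case
    using independent_F insert.hyps(2) by (simp add: independent_insert)
qed (simp add: independent_empty)

section \<open>sl2-triples\<close>

locale sl2_triple =
  fixes e f h :: "'v::euclidean_space \<Rightarrow> 'v"
  assumes linear_e: "linear e" and linear_f: "linear f" and linear_h: "linear h"
    and h_e: "\<And>x. h (e x) = e (h x) + 2 *\<^sub>R e x"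
    and h_f: "\<And>x. h (f x) = f (h x) - 2 *\<^sub>R f x"
    and e_f: "\<And>x. e (f x) = f (e x) + h x"
begin

lemma sl2_triple_dual: "sl2_triple f e (\<lambda>x. - h x)"
proof (rule sl2_triple.intro)
  show "linear (\<lambda>x. - h x)"
    using linear_h by (simp add: linear_compose_neg)
  show "- h (f x) = f (- h x) + 2 *\<^sub>R f x" for x
    using h_f[of x] linear_neg[OF linear_f, of "h x"] by simp
  show "- h (e x) = e (- h x) - 2 *\<^sub>R e x" for x
    using h_e[of x] linear_neg[OF linear_e, of "h x"] by simp
  show "f (e x) = e (f x) + - h x" for x
    using e_f[of x] by simp
qed (fact linear_f linear_e)+

lemma eigenvector_e_power:
  assumes "h v = m *\<^sub>R v"
  shows "h ((e ^^ k) v) = (m + 2 * real k) *\<^sub>R (e ^^ k) v"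
proof (induction k)
  case (Suc k)
  have "h ((e ^^ Suc k) v) = e (h ((e ^^ k) v)) + 2 *\<^sub>R e ((e ^^ k) v)"
    using h_e by simp
  also have "\<dots> = (m + 2 * real (Suc k)) *\<^sub>R (e ^^ Suc k) v"
    using Suc by (simp add: linear_add[OF linear_e] linear_scale[OF linear_e] algebra_simps)
  finally show ?case .
qed (simp add: assms)

lemma eigenvector_f_power:
  assumes "h v = m *\<^sub>R v"
  shows "h ((f ^^ k) v) = (m - 2 * real k) *\<^sub>R (f ^^ k) v"
proof (induction k)
  case (Suc k)
  have "h ((f ^^ Suc k) v) = f (h ((f ^^ k) v)) - 2 *\<^sub>R f ((f ^^ k) v)"
    using h_f by simp
  also have "\<dots> = (m - 2 * real (Suc k)) *\<^sub>R (f ^^ Suc k) v"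
    using Suc by (simp add: linear_scale[OF linear_f]) (simp add: algebra_simps)
  finally show ?case .
qed (simp add: assms)

lemma e_power_eventually_zero:
  assumes "h v = m *\<^sub>R v"
  shows "\<exists>k. (e ^^ k) v = 0"
  (* The e^k v are h-eigenvectors with the distinct eigenvalues m + 2k, so at most DIM('v)
     of them can be nonzero. *)
proof (rule ccontr)
  assume "\<nexists>k. (e ^^ k) v = 0"
  then have nonzero: "(e ^^ k) v \<noteq> 0" for k
    by blast
  have eigenvalue_eq: "j = k" if "(e ^^ j) v = (e ^^ k) v" for j k
  proof -
    have "h ((e ^^ j) v) = (m + 2 * real j) *\<^sub>R (e ^^ j) v"
      by (rule eigenvector_e_power[OF assms])
    then have "(m + 2 * real k) *\<^sub>R (e ^^ k) v = (m + 2 * real j) *\<^sub>R (e ^^ k) v"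
      unfolding that eigenvector_e_power[OF assms] .
    then show "j = k"
      using nonzero[of k] by simp
  qed
  have inj: "inj_on (\<lambda>k. (e ^^ k) v) {..DIM('v)}"
    by (rule inj_onI) (rule eigenvalue_eq)
  define S where "S = (\<lambda>k. (e ^^ k) v) ` {..DIM('v)}"
  have "independent S"
  proof (rule independent_separated_eigenvectors[where J = "UNIV :: unit set" and T = "\<lambda>_. h"])
    show "finite S" "0 \<notin> S"
      using nonzero by (auto simp: S_def)
    show "linear h" for j :: unit
      by (rule linear_h)
    show "\<exists>c. h w = c *\<^sub>R w" if w: "w \<in> S" for w
    proof -
      obtain k where "w = (e ^^ k) v"
        using w by (auto simp: S_def)
      then show ?thesis
        using eigenvector_e_power[OF assms, of k] by blast
    qed
    show "\<exists>j\<in>UNIV. \<exists>c c'. h w = c *\<^sub>R w \<and> h w' = c' *\<^sub>R w' \<and> c \<noteq> c'"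
      if ww': "w \<in> S" "w' \<in> S" "w \<noteq> w'" for w w'
    proof -
      obtain j k where jk: "w = (e ^^ j) v" "w' = (e ^^ k) v"
        using ww'(1,2) by (auto simp: S_def)
      then have "m + 2 * real j \<noteq> m + 2 * real k"
        using ww'(3) by auto
      then show ?thesis
        using eigenvector_e_power[OF assms, of j] eigenvector_e_power[OF assms, of k] jk by blast
    qed
  qed
  then have "card S \<le> DIM('v)"
    using independent_bound by blast
  moreover have "card S = Suc DIM('v)"
    using card_image[OF inj] by (simp add: S_def)
  ultimately show False
    by simp
qed

lemma f_power_eventually_zero:
  assumes "h v = m *\<^sub>R v"
  shows "\<exists>k. (f ^^ k) v = 0"
  using sl2_triple.e_power_eventually_zero[OF sl2_triple_dual, of v "- m"] assms by simp

lemma e_f_power: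
  assumes "h v = m *\<^sub>R v"
  shows "e ((f ^^ Suc k) v) = (f ^^ Suc k) (e v) + (real (Suc k) * (m - real k)) *\<^sub>R (f ^^ k) v"
proof (induction k)
  case 0
  then show ?case
    using e_f[of v] assms by simp
next
  case (Suc k)
  have "e ((f ^^ Suc (Suc k)) v) = f (e ((f ^^ Suc k) v)) + h ((f ^^ Suc k) v)"
    using e_f by simp
  also have "\<dots> = (f ^^ Suc (Suc k)) (e v)
      + (real (Suc k) * (m - real k) + (m - 2 * real (Suc k))) *\<^sub>R (f ^^ Suc k) v"
    using Suc eigenvector_f_power[OF assms, of "Suc k"] linear_f
    by (simp add: linear_add linear_scale scaleR_add_left)
  also have "real (Suc k) * (m - real k) + (m - 2 * real (Suc k)) = real (Suc (Suc k)) * (m - real (Suc k))"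
    by (simp add: algebra_simps)
  finally show ?case .
qed

lemma highest_weight_eq_string_length:
  assumes "e v = 0" "h v = m *\<^sub>R v" "(f ^^ k) v \<noteq> 0" "f ((f ^^ k) v) = 0"
  shows "m = real k"
proof -
  have "(real (Suc k) * (m - real k)) *\<^sub>R (f ^^ k) v = 0"
    using e_f_power[OF assms(2), of k] assms(1,4) linear_0[OF linear_e] linear_0[OF linear_f]
      linear_0[OF linear_funpow[OF linear_f]]
    by simp
  then show ?thesis
    using assms(3) by simp
qed

lemma eigenvalue_in_Ints:
  assumes "v \<noteq> 0" "h v = m *\<^sub>R v"
  shows "m \<in> \<int>"
proof -
  obtain k where "(e ^^ k) v = 0"
    using e_power_eventually_zero[OF assms(2)] by blast
  then obtain p where p: "(e ^^ p) v \<noteq> 0" "e ((e ^^ p) v) = 0"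
    using funpow_last_nonzero assms(1) by blast
  define v0 where "v0 = (e ^^ p) v"
  have hv0: "h v0 = (m + 2 * real p) *\<^sub>R v0"
    unfolding v0_def by (rule eigenvector_e_power[OF assms(2)])
  obtain k' where "(f ^^ k') v0 = 0"
    using f_power_eventually_zero[OF hv0] by blast
  then obtain q where q: "(f ^^ q) v0 \<noteq> 0" "f ((f ^^ q) v0) = 0"
    using funpow_last_nonzero p(1) unfolding v0_def by blast
  have "m + 2 * real p = real q"
    using highest_weight_eq_string_length[OF _ hv0 q] p(2) by (simp add: v0_def)
  then have "m = of_int (int q - 2 * int p)"
    by simp
  then show ?thesis
    by (simp only: Ints_of_int)
qed

lemma f_power_nonzero:
  assumes "v \<noteq> 0" "h v = real n *\<^sub>R v"
  shows "(f ^^ n) v \<noteq> 0"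
  (* Induction on the number of applications of e that kill v: if e v = 0 the f-string of v has
     length exactly n, otherwise e v has eigenvalue n + 2 and e_f_power transports the claim. *)
proof -
  obtain p where "(e ^^ p) v = 0"
    using e_power_eventually_zero[OF assms(2)] by blast
  then show ?thesis
    using assms
  proof (induction p arbitrary: v n)
    case (Suc p)
    show ?case
    proof (cases "e v = 0")
      case True
      show ?thesis
      proof
        assume "(f ^^ n) v = 0"
        then obtain k where "(f ^^ k) v \<noteq> 0" "f ((f ^^ k) v) = 0"
          using funpow_last_nonzero Suc.prems(2) by blast
        moreover from this have "n = k"
          using highest_weight_eq_string_length[OF True Suc.prems(3)] by simp
        ultimately show False
          using \<open>(f ^^ n) v = 0\<close> by simp
      qed
    next
      case False
      have "h (e v) = real (Suc (Suc n)) *\<^sub>R e v"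
        using eigenvector_e_power[OF Suc.prems(3), of 1] by (simp add: add.commute)
      moreover have "(e ^^ p) (e v) = 0"
        using Suc.prems(1) by (simp add: funpow_Suc_right del: funpow.simps)
      ultimately have "(f ^^ Suc (Suc n)) (e v) \<noteq> 0"
        using Suc.IH False by blast
      moreover have "(f ^^ Suc (Suc n)) (e v) = 0" if "(f ^^ n) v = 0"
        using e_f_power[OF Suc.prems(3), of n] that linear_0[OF linear_e] linear_0[OF linear_f]
        by simp
      ultimately show ?thesis
        by blast
    qed
  qed simp
qed

lemma e_power_nonzero:
  assumes "v \<noteq> 0" "h v = - (real n *\<^sub>R v)"
  shows "(e ^^ n) v \<noteq> 0"
  using sl2_triple.f_power_nonzero[OF sl2_triple_dual, of v n] assms by simp

end

section \<open>The complexified bracket\<close>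

text \<open>A pair (X, Y) stands for X + iY in g^C; cbracket is the complex bilinear extension of br.\<close>

definition cbracket :: "('g::real_vector \<Rightarrow> 'g \<Rightarrow> 'g) \<Rightarrow> 'g \<times> 'g \<Rightarrow> 'g \<times> 'g \<Rightarrow> 'g \<times> 'g" where
  "cbracket br Z W =
     (br (fst Z) (fst W) - br (snd Z) (snd W), br (fst Z) (snd W) + br (snd Z) (fst W))"

locale real_lie_algebra =
  fixes br :: "'g::euclidean_space \<Rightarrow> 'g \<Rightarrow> 'g"
  assumes lie_algebra: "lie_algebra br"
begin

lemma br_simps [simp]:
  "br (x + y) z = br x z + br y z" "br x (y + z) = br x y + br x z"
  "br (c *\<^sub>R x) z = c *\<^sub>R br x z" "br x (c *\<^sub>R z) = c *\<^sub>R br x z"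
  "br (- x) z = - br x z" "br x (- z) = - br x z"
  "br (x - y) z = br x z - br y z" "br x (y - z) = br x y - br x z"
  "br 0 z = 0" "br x 0 = 0" "br x x = 0"
  using lie_algebra unfolding lie_algebra_def
  by (simp_all add: bilinear_ladd bilinear_radd bilinear_lmul bilinear_rmul bilinear_lneg
      bilinear_rneg bilinear_lsub bilinear_rsub bilinear_lzero bilinear_rzero)

lemma br_anticommute: "br x y = - br y x"
proof -
  have "br (x + y) (x + y) = br x x + br x y + (br y x + br y y)"
    by (simp only: br_simps(1,2) ac_simps)
  then show ?thesis
    by (simp add: eq_neg_iff_add_eq_0)
qed

lemma br_jacobi: "br P (br Q u) = br Q (br P u) + br (br P Q) u"
proof -
  have "br P (br Q u) + br Q (br u P) + br u (br P Q) = 0"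
    using lie_algebra by (simp add: lie_algebra_def)
  then show ?thesis
    using br_anticommute[of u P] br_anticommute[of u "br P Q"] by (simp add: algebra_simps)
qed

lemma linear_cbracket: "linear (cbracket br Z)"
  by (rule linearI) (simp_all add: cbracket_def algebra_simps)

lemma cbracket_scaleR_left: "cbracket br (c *\<^sub>R Z) W = c *\<^sub>R cbracket br Z W"
  by (simp add: cbracket_def algebra_simps)

lemma cbracket_jacobi:
  "cbracket br Z (cbracket br W V) = cbracket br W (cbracket br Z V) + cbracket br (cbracket br Z W) V"
  by (simp add: cbracket_def br_jacobi[of "fst Z" "fst W"] br_jacobi[of "fst Z" "snd W"]
      br_jacobi[of "snd Z" "fst W"] br_jacobi[of "snd Z" "snd W"] algebra_simps)

lemma sl2_triple_cbracket:
  assumes "cbracket br A E = 2 *\<^sub>R E" "cbracket br A F = - 2 *\<^sub>R F" "cbracket br E F = A"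
  shows "sl2_triple (cbracket br E) (cbracket br F) (cbracket br A)"
proof (rule sl2_triple.intro)
  show "cbracket br A (cbracket br E x) = cbracket br E (cbracket br A x) + 2 *\<^sub>R cbracket br E x" for x
    using cbracket_jacobi[of A E x] by (simp add: assms(1) cbracket_scaleR_left)
  show "cbracket br A (cbracket br F x) = cbracket br F (cbracket br A x) - 2 *\<^sub>R cbracket br F x" for x
    using cbracket_jacobi[of A F x] by (simp only: assms(2) cbracket_scaleR_left) simp
  show "cbracket br E (cbracket br F x) = cbracket br F (cbracket br E x) + cbracket br A x" for x
    using cbracket_jacobi[of E F x] by (simp add: assms(3))
qed (rule linear_cbracket)+

end

section \<open>Root spaces of a symmetric triad\<close>

locale symmetric_triad = real_lie_algebra br
  for br :: "'g::euclidean_space \<Rightarrow> 'g \<Rightarrow> 'g" +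
  fixes \<theta>1 \<theta>2 :: "'g \<Rightarrow> 'g" and a :: "'g set"
  assumes ad_invariant: "ad_invariant_inner br"
    and involution1: "involutive_automorphism br \<theta>1"
    and involution2: "involutive_automorphism br \<theta>2"
    and maximal_abelian: "maximal_abelian_subspace_in br (minus_space \<theta>1 \<inter> minus_space \<theta>2) a"
begin

lemma inner_br: "inner (br X Y) Z = - inner Y (br X Z)"
  using ad_invariant by (simp add: ad_invariant_inner_def eq_neg_iff_add_eq_0)

lemma linear_theta1: "linear \<theta>1" and theta1_br: "\<theta>1 (br x y) = br (\<theta>1 x) (\<theta>1 y)"
  and theta1_theta1 [simp]: "\<theta>1 (\<theta>1 x) = x"
  using involution1 by (auto simp: involutive_automorphism_def lie_automorphism_def)

lemma linear_theta2: "linear \<theta>2" and theta2_br: "\<theta>2 (br x y) = br (\<theta>2 x) (\<theta>2 y)"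
  and theta2_theta2 [simp]: "\<theta>2 (\<theta>2 x) = x"
  using involution2 by (auto simp: involutive_automorphism_def lie_automorphism_def)

lemma theta1_simps [simp]:
  "\<theta>1 (x + y) = \<theta>1 x + \<theta>1 y" "\<theta>1 (c *\<^sub>R x) = c *\<^sub>R \<theta>1 x" "\<theta>1 (- x) = - \<theta>1 x"
  "\<theta>1 (x - y) = \<theta>1 x - \<theta>1 y" "\<theta>1 0 = 0"
  using linear_theta1 by (simp_all add: linear_add linear_scale linear_neg linear_diff linear_0)

lemma theta2_simps [simp]:
  "\<theta>2 (x + y) = \<theta>2 x + \<theta>2 y" "\<theta>2 (c *\<^sub>R x) = c *\<^sub>R \<theta>2 x" "\<theta>2 (- x) = - \<theta>2 x"
  "\<theta>2 (x - y) = \<theta>2 x - \<theta>2 y" "\<theta>2 0 = 0"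
  using linear_theta2 by (simp_all add: linear_add linear_scale linear_neg linear_diff linear_0)

lemma subspace_a: "subspace a"
  and br_a_eq_0: "\<And>x y. x \<in> a \<Longrightarrow> y \<in> a \<Longrightarrow> br x y = 0"
  and a_subset: "a \<subseteq> minus_space \<theta>1 \<inter> minus_space \<theta>2"
  using maximal_abelian by (auto simp: maximal_abelian_subspace_in_def abelian_subspace_def)

lemma theta1_a: "H \<in> a \<Longrightarrow> \<theta>1 H = - H"
  using a_subset by (auto simp: minus_space_def)

lemma centralizer_of_a:
  assumes "d \<in> minus_space \<theta>1 \<inter> minus_space \<theta>2" "\<And>H. H \<in> a \<Longrightarrow> br H d = 0"
  shows "d \<in> a"
proof -
  define b where "b = span (insert d a)"
  have "abelian_subspace br b"
    unfolding abelian_subspace_def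
  proof (intro conjI ballI)
    show "subspace b"
      by (simp add: b_def)
    fix x y assume "x \<in> b" "y \<in> b"
    then obtain k1 k2 where "x - k1 *\<^sub>R d \<in> a" "y - k2 *\<^sub>R d \<in> a"
      using span_eq_iff[THEN iffD2, OF subspace_a] by (auto simp: b_def span_insert)
    then obtain H1 H2 where H: "H1 \<in> a" "H2 \<in> a" "x = H1 + k1 *\<^sub>R d" "y = H2 + k2 *\<^sub>R d"
      by (metis diff_add_cancel)
    have "br H1 H2 = 0" "br H1 d = 0" "br d H2 = 0"
      using br_a_eq_0 assms(2) H(1,2) br_anticommute[of d H2] by simp_all
    then show "br x y = 0"
      unfolding H(3,4) by simp
  qed
  moreover have "a \<subseteq> b"
    unfolding b_def by (meson span_superset subset_insertI subset_trans)
  moreover have "b \<subseteq> minus_space \<theta>1 \<inter> minus_space \<theta>2"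
    unfolding b_def using a_subset assms(1)
    by (intro span_minimal) (auto simp: subspace_def minus_space_def)
  ultimately have "b = a"
    using maximal_abelian by (simp add: maximal_abelian_subspace_in_def)
  then show ?thesis
    using span_superset[of "insert d a"] unfolding b_def by blast
qed

lemma root_space_iff:
  "(X, Y) \<in> root_space br a \<gamma> \<longleftrightarrow> (\<forall>H\<in>a. br H X = - inner \<gamma> H *\<^sub>R Y \<and> br H Y = inner \<gamma> H *\<^sub>R X)"
  by (simp add: root_space_def)

lemma root_space_eps_iff:
  "(X, Y) \<in> root_space_eps br \<theta>1 \<theta>2 a \<gamma> \<epsilon> \<longleftrightarrow> (X, Y) \<in> root_space br a \<gamma> \<and>
     \<theta>1 (\<theta>2 X) = Re \<epsilon> *\<^sub>R X - Im \<epsilon> *\<^sub>R Y \<and> \<theta>1 (\<theta>2 Y) = Im \<epsilon> *\<^sub>R X + Re \<epsilon> *\<^sub>R Y"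
  by (simp add: root_space_eps_def cscale_def)

lemma root_space_eps_add:
  "Z \<in> root_space_eps br \<theta>1 \<theta>2 a \<gamma> \<epsilon> \<Longrightarrow> W \<in> root_space_eps br \<theta>1 \<theta>2 a \<gamma> \<epsilon> \<Longrightarrow>
    Z + W \<in> root_space_eps br \<theta>1 \<theta>2 a \<gamma> \<epsilon>"
  by (cases Z, cases W) (simp add: root_space_eps_iff root_space_iff, simp add: algebra_simps)

lemma root_space_eps_scaleR:
  "Z \<in> root_space_eps br \<theta>1 \<theta>2 a \<gamma> \<epsilon> \<Longrightarrow> c *\<^sub>R Z \<in> root_space_eps br \<theta>1 \<theta>2 a \<gamma> \<epsilon>"
  by (cases Z) (simp add: root_space_eps_iff root_space_iff, simp add: algebra_simps)

lemma root_space_eps_mult_i: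
  "(X, Y) \<in> root_space_eps br \<theta>1 \<theta>2 a \<gamma> \<epsilon> \<Longrightarrow> (- Y, X) \<in> root_space_eps br \<theta>1 \<theta>2 a \<gamma> \<epsilon>"
  by (simp add: root_space_eps_iff root_space_iff algebra_simps)

lemma root_space_eps_conj:
  "(X, Y) \<in> root_space_eps br \<theta>1 \<theta>2 a \<gamma> \<epsilon> \<Longrightarrow> (X, - Y) \<in> root_space_eps br \<theta>1 \<theta>2 a (- \<gamma>) (cnj \<epsilon>)"
  by (simp add: root_space_eps_iff root_space_iff algebra_simps)

lemma root_space_eps_cbracket:
  assumes "Z \<in> root_space_eps br \<theta>1 \<theta>2 a \<alpha> \<epsilon>" "W \<in> root_space_eps br \<theta>1 \<theta>2 a \<gamma> \<delta>"
  shows "cbracket br Z W \<in> root_space_eps br \<theta>1 \<theta>2 a (\<alpha> + \<gamma>) (\<epsilon> * \<delta>)"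
proof -
  obtain X Y U V where ZW: "Z = (X, Y)" "W = (U, V)"
    by (cases Z, cases W)
  have "br H (br X U - br Y V) = - inner (\<alpha> + \<gamma>) H *\<^sub>R (br X V + br Y U) \<and>
        br H (br X V + br Y U) = inner (\<alpha> + \<gamma>) H *\<^sub>R (br X U - br Y V)" if "H \<in> a" for H
  proof -
    have "br H X = - inner \<alpha> H *\<^sub>R Y" "br H Y = inner \<alpha> H *\<^sub>R X"
      "br H U = - inner \<gamma> H *\<^sub>R V" "br H V = inner \<gamma> H *\<^sub>R U"
      using assms that by (simp_all add: ZW root_space_eps_iff root_space_iff)
    moreover have "br H (br P Q) = br P (br H Q) + br (br H P) Q" for P Q
      by (rule br_jacobi)
    ultimately show ?thesis
      by (simp only: br_simps) (simp add: inner_add_left algebra_simps)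
  qed
  then have root: "(br X U - br Y V, br X V + br Y U) \<in> root_space br a (\<alpha> + \<gamma>)"
    unfolding root_space_iff by blast
  have rotation: "\<theta>1 (\<theta>2 X) = Re \<epsilon> *\<^sub>R X - Im \<epsilon> *\<^sub>R Y" "\<theta>1 (\<theta>2 Y) = Im \<epsilon> *\<^sub>R X + Re \<epsilon> *\<^sub>R Y"
    "\<theta>1 (\<theta>2 U) = Re \<delta> *\<^sub>R U - Im \<delta> *\<^sub>R V" "\<theta>1 (\<theta>2 V) = Im \<delta> *\<^sub>R U + Re \<delta> *\<^sub>R V"
    using assms by (simp_all add: ZW root_space_eps_iff)
  have theta_br: "\<theta>1 (\<theta>2 (br P Q)) = br (\<theta>1 (\<theta>2 P)) (\<theta>1 (\<theta>2 Q))" for P Q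
    by (simp add: theta1_br theta2_br)
  have "\<theta>1 (\<theta>2 (br X U - br Y V)) =
      Re (\<epsilon> * \<delta>) *\<^sub>R (br X U - br Y V) - Im (\<epsilon> * \<delta>) *\<^sub>R (br X V + br Y U)"
    "\<theta>1 (\<theta>2 (br X V + br Y U)) =
      Im (\<epsilon> * \<delta>) *\<^sub>R (br X U - br Y V) + Re (\<epsilon> * \<delta>) *\<^sub>R (br X V + br Y U)"
    by (simp_all only: theta1_simps theta2_simps theta_br rotation) (simp_all add: algebra_simps)
  then show ?thesis
    using root by (simp add: ZW cbracket_def root_space_eps_iff)
qed

lemma theta2_theta1_root_space_eps:
  assumes "(X, Y) \<in> root_space_eps br \<theta>1 \<theta>2 a \<gamma> \<epsilon>" "cmod \<epsilon> = 1"
  shows "\<theta>2 (\<theta>1 X) = Re \<epsilon> *\<^sub>R X + Im \<epsilon> *\<^sub>R Y" "\<theta>2 (\<theta>1 Y) = - Im \<epsilon> *\<^sub>R X + Re \<epsilon> *\<^sub>R Y"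
proof -
  have unit: "(Re \<epsilon>)\<^sup>2 + (Im \<epsilon>)\<^sup>2 = 1"
    using assms(2) by (simp add: cmod_def)
  have rotation: "\<theta>1 (\<theta>2 X) = Re \<epsilon> *\<^sub>R X - Im \<epsilon> *\<^sub>R Y" "\<theta>1 (\<theta>2 Y) = Im \<epsilon> *\<^sub>R X + Re \<epsilon> *\<^sub>R Y"
    using assms(1) by (simp_all add: root_space_eps_iff)
  have "\<theta>1 (\<theta>2 (Re \<epsilon> *\<^sub>R X + Im \<epsilon> *\<^sub>R Y)) = ((Re \<epsilon>)\<^sup>2 + (Im \<epsilon>)\<^sup>2) *\<^sub>R X"
    "\<theta>1 (\<theta>2 (- Im \<epsilon> *\<^sub>R X + Re \<epsilon> *\<^sub>R Y)) = ((Re \<epsilon>)\<^sup>2 + (Im \<epsilon>)\<^sup>2) *\<^sub>R Y"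
    by (simp_all only: theta1_simps theta2_simps rotation)
       (simp_all add: algebra_simps power2_eq_square)
  then have X: "\<theta>1 (\<theta>2 (Re \<epsilon> *\<^sub>R X + Im \<epsilon> *\<^sub>R Y)) = X"
    and Y: "\<theta>1 (\<theta>2 (- Im \<epsilon> *\<^sub>R X + Re \<epsilon> *\<^sub>R Y)) = Y"
    using unit by simp_all
  have inverse: "\<theta>2 (\<theta>1 Z) = R" if "\<theta>1 (\<theta>2 R) = Z" for R Z
    using arg_cong[where f = "\<lambda>z. \<theta>2 (\<theta>1 z)", OF that] by simp
  show "\<theta>2 (\<theta>1 X) = Re \<epsilon> *\<^sub>R X + Im \<epsilon> *\<^sub>R Y" "\<theta>2 (\<theta>1 Y) = - Im \<epsilon> *\<^sub>R X + Re \<epsilon> *\<^sub>R Y"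
    by (rule inverse[OF X], rule inverse[OF Y])
qed

lemma root_space_eps_theta1:
  assumes "(X, Y) \<in> root_space_eps br \<theta>1 \<theta>2 a \<gamma> \<epsilon>" "cmod \<epsilon> = 1"
  shows "(\<theta>1 X, - \<theta>1 Y) \<in> root_space_eps br \<theta>1 \<theta>2 a \<gamma> \<epsilon>"
proof -
  have br_theta1: "br H (\<theta>1 Z) = - \<theta>1 (br H Z)" if "H \<in> a" for H Z
    using theta1_br[of "\<theta>1 H" Z] theta1_a[OF that] by simp
  have root: "br H X = - inner \<gamma> H *\<^sub>R Y" "br H Y = inner \<gamma> H *\<^sub>R X" if "H \<in> a" for H
    using assms(1) that by (simp_all add: root_space_eps_iff root_space_iff)
  show ?thesis
    unfolding root_space_eps_iff root_space_iff
    by (simp add: br_theta1 root theta2_theta1_root_space_eps[OF assms])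
qed

text \<open>The antilinear involution (X, Y) \<mapsto> (\<theta>1 X, - \<theta>1 Y) preserves each g(\<gamma>, \<epsilon>), so a nonzero
  vector of g(\<gamma>, \<epsilon>) yields a nonzero fixed vector: its sum with its image, or else its
  product with \<i>.\<close>

lemma adapted_root_vector:
  assumes "(X0, Y0) \<in> root_space_eps br \<theta>1 \<theta>2 a \<gamma> \<epsilon>" "(X0, Y0) \<noteq> 0" "cmod \<epsilon> = 1"
  obtains X Y where "(X, Y) \<in> root_space_eps br \<theta>1 \<theta>2 a \<gamma> \<epsilon>" "(X, Y) \<noteq> 0"
    "\<theta>1 X = X" "\<theta>1 Y = - Y"
proof (cases "(X0 + \<theta>1 X0, Y0 - \<theta>1 Y0) = 0")
  case False
  have "(X0, Y0) + (\<theta>1 X0, - \<theta>1 Y0) \<in> root_space_eps br \<theta>1 \<theta>2 a \<gamma> \<epsilon>"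
    using root_space_eps_add root_space_eps_theta1 assms(1,3) by blast
  then show ?thesis
    using that[of "X0 + \<theta>1 X0" "Y0 - \<theta>1 Y0"] False by (simp add: add.commute)
next
  case True
  then have "\<theta>1 X0 = - X0" "\<theta>1 Y0 = Y0"
    by (simp_all add: zero_prod_def eq_neg_iff_add_eq_0 add.commute)
  then show ?thesis
    using that[of "- Y0" X0] root_space_eps_mult_i[OF assms(1)] assms(2) by (auto simp: zero_prod_def)
qed

lemma root_vector_snd_nonzero:
  assumes "(X, Y) \<in> root_space br a \<gamma>" "(X, Y) \<noteq> 0" "\<gamma> \<in> a" "\<gamma> \<noteq> 0"
  shows "Y \<noteq> 0"
proof
  assume "Y = 0"
  then have "inner \<gamma> \<gamma> *\<^sub>R X = 0"
    using assms(1,3) by (auto simp: root_space_def)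
  then show False
    using assms(2,4) \<open>Y = 0\<close> by (simp add: zero_prod_def)
qed

lemma adapted_root_vector_bracket_in_a:
  assumes "(X, Y) \<in> root_space_eps br \<theta>1 \<theta>2 a \<alpha> \<epsilon>" "cmod \<epsilon> = 1"
    and "\<theta>1 X = X" "\<theta>1 Y = - Y"
  shows "br X Y \<in> a"
proof (rule centralizer_of_a)
  have "\<theta>2 (br X Y) = \<theta>2 (\<theta>1 (br X (- Y)))"
    using assms(3,4) theta1_br[of X "- Y"] by simp
  also have "\<dots> = br (\<theta>2 (\<theta>1 X)) (\<theta>2 (\<theta>1 (- Y)))"
    by (simp only: theta1_br theta2_br)
  also have "\<dots> = - ((Re \<epsilon>)\<^sup>2 + (Im \<epsilon>)\<^sup>2) *\<^sub>R br X Y"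
    using br_anticommute[of Y X]
    by (simp only: theta1_simps theta2_simps theta2_theta1_root_space_eps[OF assms(1,2)])
       (simp add: algebra_simps power2_eq_square)
  also have "- ((Re \<epsilon>)\<^sup>2 + (Im \<epsilon>)\<^sup>2) *\<^sub>R br X Y = - br X Y"
    using assms(2) by (simp add: cmod_def)
  finally have "\<theta>2 (br X Y) = - br X Y" .
  moreover have "\<theta>1 (br X Y) = - br X Y"
    using theta1_br[of X Y] assms(3,4) by simp
  ultimately show "br X Y \<in> minus_space \<theta>1 \<inter> minus_space \<theta>2"
    by (simp add: minus_space_def)
  show "br H (br X Y) = 0" if "H \<in> a" for H
    using br_jacobi[of H X Y] assms(1) that by (simp add: root_space_eps_iff root_space_iff)
qed

lemma adapted_root_vector_bracket:
  assumes "(X, Y) \<in> root_space_eps br \<theta>1 \<theta>2 a \<alpha> \<epsilon>" "cmod \<epsilon> = 1" "\<alpha> \<in> a"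
    and "\<theta>1 X = X" "\<theta>1 Y = - Y"
  shows "br X Y = - inner Y Y *\<^sub>R \<alpha>"
proof -
  define D where "D = br X Y + inner Y Y *\<^sub>R \<alpha>"
  have "D \<in> a"
    using adapted_root_vector_bracket_in_a[OF assms(1,2,4,5)] assms(3) subspace_a
    by (simp add: D_def subspace_add subspace_scale)
  moreover have "inner D H = 0" if "H \<in> a" for H
  proof -
    have "br H X = - inner \<alpha> H *\<^sub>R Y"
      using assms(1) that by (simp add: root_space_eps_iff root_space_iff)
    then show ?thesis
      using inner_br[of X Y H] br_anticommute[of X H]
      by (simp add: D_def inner_add_left inner_add_right inner_commute)
  qed
  ultimately have "inner D D = 0"
    by blast
  then show ?thesis
    by (simp add: D_def eq_neg_iff_add_eq_0)
qed

lemma cbracket_imaginary_root_vector: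
  assumes "H \<in> a" "v \<in> root_space br a \<gamma>"
  shows "cbracket br (0, H) v = - inner \<gamma> H *\<^sub>R v"
  using assms by (cases v) (simp add: cbracket_def root_space_def)

lemma sl2_triple_root_vector:
  assumes "(X, Y) \<in> root_space br a \<alpha>" "\<alpha> \<in> a" "\<alpha> \<noteq> 0" "br X Y = - s *\<^sub>R \<alpha>" "s \<noteq> 0"
  shows "sl2_triple (cbracket br (X, Y)) (cbracket br ((- 1 / (s * inner \<alpha> \<alpha>)) *\<^sub>R (X, - Y)))
    (cbracket br (0, (- 2 / inner \<alpha> \<alpha>) *\<^sub>R \<alpha>))"
proof (rule sl2_triple_cbracket)
  have "br \<alpha> X = - inner \<alpha> \<alpha> *\<^sub>R Y" "br \<alpha> Y = inner \<alpha> \<alpha> *\<^sub>R X"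
    using assms(1,2) by (auto simp: root_space_def)
  moreover have "inner \<alpha> \<alpha> \<noteq> 0"
    using assms(3) by simp
  ultimately show "cbracket br (0, (- 2 / inner \<alpha> \<alpha>) *\<^sub>R \<alpha>) (X, Y) = 2 *\<^sub>R (X, Y)"
    "cbracket br (0, (- 2 / inner \<alpha> \<alpha>) *\<^sub>R \<alpha>) ((- 1 / (s * inner \<alpha> \<alpha>)) *\<^sub>R (X, - Y)) =
       - 2 *\<^sub>R (- 1 / (s * inner \<alpha> \<alpha>)) *\<^sub>R (X, - Y)"
    by (simp_all add: cbracket_def)
  have "(- 2 / inner \<alpha> \<alpha>) *\<^sub>R \<alpha> = (- 1 / inner \<alpha> \<alpha> + - 1 / inner \<alpha> \<alpha>) *\<^sub>R \<alpha>"
    by (rule arg_cong[where f = "\<lambda>t. t *\<^sub>R \<alpha>"]) simp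
  also have "\<dots> = (- 1 / inner \<alpha> \<alpha>) *\<^sub>R \<alpha> + (- 1 / inner \<alpha> \<alpha>) *\<^sub>R \<alpha>"
    by (rule scaleR_add_left)
  finally have "(- 2 / inner \<alpha> \<alpha>) *\<^sub>R \<alpha> = (- 1 / inner \<alpha> \<alpha>) *\<^sub>R \<alpha> + (- 1 / inner \<alpha> \<alpha>) *\<^sub>R \<alpha>" .
  then show "cbracket br (X, Y) ((- 1 / (s * inner \<alpha> \<alpha>)) *\<^sub>R (X, - Y)) = (0, (- 2 / inner \<alpha> \<alpha>) *\<^sub>R \<alpha>)"
    using assms(4,5) br_anticommute[of Y X] by (simp add: cbracket_def)
qed

end

section \<open>The root system \<Sigma>~_H\<close>

lemma reflection_nonzero:
  fixes \<alpha> \<beta> :: "'a::real_inner"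
  assumes "\<alpha> \<noteq> 0" "\<beta> \<noteq> 0"
  shows "\<beta> - (2 * inner \<beta> \<alpha> / inner \<alpha> \<alpha>) *\<^sub>R \<alpha> \<noteq> 0"
proof
  define n where "n = 2 * inner \<beta> \<alpha> / inner \<alpha> \<alpha>"
  assume "\<beta> - (2 * inner \<beta> \<alpha> / inner \<alpha> \<alpha>) *\<^sub>R \<alpha> = 0"
  then have \<beta>: "\<beta> = n *\<^sub>R \<alpha>"
    by (simp add: n_def)
  then have "inner \<beta> \<alpha> = n * inner \<alpha> \<alpha>"
    by simp
  also have "\<dots> = 2 * inner \<beta> \<alpha>"
    using assms(1) by (simp add: n_def)
  finally have "n = 0"
    by (simp add: n_def)
  then show False
    using \<beta> assms(2) by simp
qed

text \<open>For \<gamma> \<in> \<Sigma>_\<epsilon> the condition of \<Sigma>_{\<epsilon>,H} says exactly that \<epsilon> = cis (-2 <\<gamma>,H>), so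
  \<Sigma>~_H consists of the nonzero \<gamma> \<in> a whose space below is nonzero.\<close>

definition root_space_H ::
  "('g::euclidean_space \<Rightarrow> 'g \<Rightarrow> 'g) \<Rightarrow> ('g \<Rightarrow> 'g) \<Rightarrow> ('g \<Rightarrow> 'g) \<Rightarrow> 'g set \<Rightarrow> 'g \<Rightarrow> 'g
     \<Rightarrow> ('g \<times> 'g) set" where
  "root_space_H br \<theta>1 \<theta>2 a H \<gamma> = root_space_eps br \<theta>1 \<theta>2 a \<gamma> (cis (- 2 * inner \<gamma> H))"

context symmetric_triad
begin

lemma independent_root_vectors:
  fixes root_vec :: "'g \<Rightarrow> 'g \<times> 'g"
  assumes "finite G" "G \<subseteq> a" "\<And>\<gamma>. \<gamma> \<in> G \<Longrightarrow> root_vec \<gamma> \<in> root_space br a \<gamma> \<and> root_vec \<gamma> \<noteq> 0"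
  shows "inj_on root_vec G" "independent (root_vec ` G)"
proof -
  have eigen: "cbracket br (0, H) (root_vec \<gamma>) = - inner \<gamma> H *\<^sub>R root_vec \<gamma>" if "\<gamma> \<in> G" "H \<in> a" for \<gamma> H
    using cbracket_imaginary_root_vector[OF that(2)] assms(3)[OF that(1)] by blast
  have separated: "\<gamma>' - \<gamma> \<in> a \<and> - inner \<gamma> (\<gamma>' - \<gamma>) \<noteq> - inner \<gamma>' (\<gamma>' - \<gamma>)"
    if "\<gamma> \<in> G" "\<gamma>' \<in> G" "\<gamma> \<noteq> \<gamma>'" for \<gamma> \<gamma>'
  proof
    show "\<gamma>' - \<gamma> \<in> a"
      using that(1,2) assms(2) by (intro subspace_diff[OF subspace_a]) auto
    have "inner (\<gamma>' - \<gamma>) (\<gamma>' - \<gamma>) \<noteq> 0"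
      using that(3) by simp
    then show "- inner \<gamma> (\<gamma>' - \<gamma>) \<noteq> - inner \<gamma>' (\<gamma>' - \<gamma>)"
      by (simp add: inner_diff_left)
  qed
  show "inj_on root_vec G"
  proof (rule inj_onI, rule ccontr)
    fix \<gamma> \<gamma>' assume \<gamma>: "\<gamma> \<in> G" "\<gamma>' \<in> G" "root_vec \<gamma> = root_vec \<gamma>'" "\<gamma> \<noteq> \<gamma>'"
    then have "- inner \<gamma> (\<gamma>' - \<gamma>) *\<^sub>R root_vec \<gamma> = - inner \<gamma>' (\<gamma>' - \<gamma>) *\<^sub>R root_vec \<gamma>"
      using eigen separated by metis
    then show False
      using separated[OF \<gamma>(1,2,4)] assms(3)[OF \<gamma>(1)] by simp
  qed
  show "independent (root_vec ` G)"
  proof (rule independent_separated_eigenvectors[where J = a and T = "\<lambda>H. cbracket br (0, H)"])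
    show "finite (root_vec ` G)" "0 \<notin> root_vec ` G"
      using assms(1,3) by auto
    show "linear (cbracket br (0, H))" for H
      by (rule linear_cbracket)
    show "\<exists>c. cbracket br (0, H) w = c *\<^sub>R w" if H: "H \<in> a" and w: "w \<in> root_vec ` G" for H w
      using eigen[OF _ H] w by blast
    show "\<exists>H\<in>a. \<exists>c c'. cbracket br (0, H) w = c *\<^sub>R w \<and> cbracket br (0, H) w' = c' *\<^sub>R w' \<and> c \<noteq> c'"
      if ww': "w \<in> root_vec ` G" "w' \<in> root_vec ` G" "w \<noteq> w'" for w w'
    proof -
      obtain \<gamma> \<gamma>' where \<gamma>: "\<gamma> \<in> G" "\<gamma>' \<in> G" "w = root_vec \<gamma>" "w' = root_vec \<gamma>'"
        using ww'(1,2) by auto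
      then have "\<gamma> \<noteq> \<gamma>'"
        using ww'(3) by blast
      then show ?thesis
        using separated[OF \<gamma>(1,2)] eigen[OF \<gamma>(1)] eigen[OF \<gamma>(2)] \<gamma>(3,4) by blast
    qed
  qed
qed

lemma finite_roots: "finite {\<gamma> \<in> a. \<exists>v \<in> root_space br a \<gamma>. v \<noteq> 0}"
proof (rule ccontr)
  define G where "G = {\<gamma> \<in> a. \<exists>v \<in> root_space br a \<gamma>. v \<noteq> 0}"
  assume "infinite {\<gamma> \<in> a. \<exists>v \<in> root_space br a \<gamma>. v \<noteq> 0}"
  then obtain G' where G': "G' \<subseteq> G" "finite G'" "card G' = Suc DIM('g \<times> 'g)"
    using infinite_arbitrarily_large unfolding G_def by blast
  have root_vectors_exist: "\<forall>\<gamma>\<in>G'. \<exists>v. v \<in> root_space br a \<gamma> \<and> v \<noteq> 0"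
    using G'(1) unfolding G_def by blast
  obtain root_vec where root_vec: "\<And>\<gamma>. \<gamma> \<in> G' \<Longrightarrow> root_vec \<gamma> \<in> root_space br a \<gamma> \<and> root_vec \<gamma> \<noteq> 0"
    using bchoice[OF root_vectors_exist] by blast
  have "G' \<subseteq> a"
    using G'(1) by (auto simp: G_def)
  then have "inj_on root_vec G'" "independent (root_vec ` G')"
    using independent_root_vectors[OF G'(2) _ root_vec] by auto
  then have "card G' \<le> DIM('g \<times> 'g)"
    using independent_bound[of "root_vec ` G'"] card_image[of root_vec G'] by simp
  then show False
    using G'(3) by simp
qed

lemma zero_in_root_space_eps: "0 \<in> root_space_eps br \<theta>1 \<theta>2 a \<gamma> \<epsilon>"
  by (simp add: zero_prod_def root_space_eps_iff root_space_def)

lemma Sigma_tilde_H_iff: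
  "\<gamma> \<in> Sigma_tilde_H br \<theta>1 \<theta>2 a H \<longleftrightarrow>
     \<gamma> \<in> a \<and> \<gamma> \<noteq> 0 \<and> (\<exists>Z \<in> root_space_H br \<theta>1 \<theta>2 a H \<gamma>. Z \<noteq> 0)"
proof -
  have "root_space_eps br \<theta>1 \<theta>2 a \<gamma> \<epsilon> \<noteq> {(0, 0)} \<longleftrightarrow> (\<exists>Z \<in> root_space_eps br \<theta>1 \<theta>2 a \<gamma> \<epsilon>. Z \<noteq> 0)"
    for \<epsilon>
    using zero_in_root_space_eps by (auto simp: zero_prod_def)
  then show ?thesis
    unfolding Sigma_tilde_H_def Sigma_eps_H_def Sigma_eps_def root_space_H_def
    by (auto simp: phase_condition_iff)
qed

lemma root_space_H_cbracket:
  assumes "Z \<in> root_space_H br \<theta>1 \<theta>2 a H \<alpha>" "W \<in> root_space_H br \<theta>1 \<theta>2 a H \<gamma>"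
  shows "cbracket br Z W \<in> root_space_H br \<theta>1 \<theta>2 a H (\<alpha> + \<gamma>)"
proof -
  have "cis (- 2 * inner \<alpha> H) * cis (- 2 * inner \<gamma> H) = cis (- 2 * inner (\<alpha> + \<gamma>) H)"
    by (simp add: cis_mult inner_add_left distrib_left)
  then show ?thesis
    using root_space_eps_cbracket[OF assms[unfolded root_space_H_def]] by (simp add: root_space_H_def)
qed

lemma root_space_H_funpow_cbracket:
  assumes "Z \<in> root_space_H br \<theta>1 \<theta>2 a H \<alpha>" "W \<in> root_space_H br \<theta>1 \<theta>2 a H \<gamma>"
  shows "(cbracket br Z ^^ N) W \<in> root_space_H br \<theta>1 \<theta>2 a H (\<gamma> + real N *\<^sub>R \<alpha>)"
proof (induction N)
  case (Suc N)
  then have "cbracket br Z ((cbracket br Z ^^ N) W) \<in> root_space_H br \<theta>1 \<theta>2 a H (\<alpha> + (\<gamma> + real N *\<^sub>R \<alpha>))"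
    using root_space_H_cbracket assms(1) by blast
  then show ?case
    by (simp add: algebra_simps)
qed (simp add: assms(2))

lemma root_space_H_conj:
  assumes "(X, Y) \<in> root_space_H br \<theta>1 \<theta>2 a H \<alpha>"
  shows "c *\<^sub>R (X, - Y) \<in> root_space_H br \<theta>1 \<theta>2 a H (- \<alpha>)"
proof -
  have "cnj (cis (- 2 * inner \<alpha> H)) = cis (- 2 * inner (- \<alpha>) H)"
    by (simp add: cis_cnj)
  then show ?thesis
    using root_space_eps_scaleR[OF root_space_eps_conj[OF assms[unfolded root_space_H_def]]]
    by (simp add: root_space_H_def)
qed

lemma root_sl2_triple:
  assumes "\<alpha> \<in> Sigma_tilde_H br \<theta>1 \<theta>2 a H"
  obtains E F where "E \<in> root_space_H br \<theta>1 \<theta>2 a H \<alpha>" "F \<in> root_space_H br \<theta>1 \<theta>2 a H (- \<alpha>)"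
    "sl2_triple (cbracket br E) (cbracket br F) (cbracket br (0, (- 2 / inner \<alpha> \<alpha>) *\<^sub>R \<alpha>))"
proof -
  obtain X0 Y0 where \<alpha>: "\<alpha> \<in> a" "\<alpha> \<noteq> 0"
    and Z: "(X0, Y0) \<in> root_space_eps br \<theta>1 \<theta>2 a \<alpha> (cis (- 2 * inner \<alpha> H))" "(X0, Y0) \<noteq> 0"
    using assms by (auto simp: Sigma_tilde_H_iff root_space_H_def)
  obtain X Y where XY: "(X, Y) \<in> root_space_eps br \<theta>1 \<theta>2 a \<alpha> (cis (- 2 * inner \<alpha> H))"
    and XY_nonzero: "(X, Y) \<noteq> 0" and \<theta>: "\<theta>1 X = X" "\<theta>1 Y = - Y"
    by (rule adapted_root_vector[OF Z norm_cis])
  have "br X Y = - inner Y Y *\<^sub>R \<alpha>"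
    by (rule adapted_root_vector_bracket[OF XY norm_cis \<alpha>(1) \<theta>])
  moreover have root: "(X, Y) \<in> root_space br a \<alpha>"
    using XY by (simp add: root_space_eps_def)
  moreover have "inner Y Y \<noteq> 0"
    using root_vector_snd_nonzero[OF root XY_nonzero \<alpha>] by simp
  moreover have "(X, Y) \<in> root_space_H br \<theta>1 \<theta>2 a H \<alpha>"
    using XY by (simp add: root_space_H_def)
  ultimately show ?thesis
    using that root_space_H_conj sl2_triple_root_vector[OF root \<alpha>] by blast
qed

lemma root_reflection:
  assumes "\<alpha> \<in> Sigma_tilde_H br \<theta>1 \<theta>2 a H" "\<beta> \<in> Sigma_tilde_H br \<theta>1 \<theta>2 a H"
  shows "2 * inner \<beta> \<alpha> / inner \<alpha> \<alpha> \<in> \<int>"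
    and "\<beta> - (2 * inner \<beta> \<alpha> / inner \<alpha> \<alpha>) *\<^sub>R \<alpha> \<in> Sigma_tilde_H br \<theta>1 \<theta>2 a H"
proof -
  define n where "n = 2 * inner \<beta> \<alpha> / inner \<alpha> \<alpha>"
  obtain E F where E: "E \<in> root_space_H br \<theta>1 \<theta>2 a H \<alpha>" and F: "F \<in> root_space_H br \<theta>1 \<theta>2 a H (- \<alpha>)"
    and sl2: "sl2_triple (cbracket br E) (cbracket br F) (cbracket br (0, (- 2 / inner \<alpha> \<alpha>) *\<^sub>R \<alpha>))"
    using root_sl2_triple[OF assms(1)] by blast
  obtain v where \<alpha>: "\<alpha> \<in> a" "\<alpha> \<noteq> 0" and \<beta>: "\<beta> \<in> a" "\<beta> \<noteq> 0"
    and v: "v \<in> root_space_H br \<theta>1 \<theta>2 a H \<beta>" "v \<noteq> 0"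
    using assms Sigma_tilde_H_iff by blast
  have "(- 2 / inner \<alpha> \<alpha>) *\<^sub>R \<alpha> \<in> a"
    by (rule subspace_scale[OF subspace_a \<alpha>(1)])
  moreover have "v \<in> root_space br a \<beta>"
    using v(1) by (simp add: root_space_H_def root_space_eps_def)
  ultimately have "cbracket br (0, (- 2 / inner \<alpha> \<alpha>) *\<^sub>R \<alpha>) v = - inner \<beta> ((- 2 / inner \<alpha> \<alpha>) *\<^sub>R \<alpha>) *\<^sub>R v"
    by (rule cbracket_imaginary_root_vector)
  also have "- inner \<beta> ((- 2 / inner \<alpha> \<alpha>) *\<^sub>R \<alpha>) = n"
    by (simp add: n_def)
  finally have weight: "cbracket br (0, (- 2 / inner \<alpha> \<alpha>) *\<^sub>R \<alpha>) v = n *\<^sub>R v" .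
  show "n \<in> \<int>"
    using sl2_triple.eigenvalue_in_Ints[OF sl2 v(2) weight] .
  then obtain z :: int where z: "n = of_int z"
    by (auto elim: Ints_cases)
  have "\<exists>w \<in> root_space_H br \<theta>1 \<theta>2 a H (\<beta> - n *\<^sub>R \<alpha>). w \<noteq> 0"
  proof (cases "z \<ge> 0")
    case True
    then have "n = real (nat z)"
      using z by simp
    then show ?thesis
      using sl2_triple.f_power_nonzero[OF sl2 v(2)] weight root_space_H_funpow_cbracket[OF F v(1), of "nat z"]
      by auto
  next
    case False
    then have "n = - real (nat (- z))"
      using z by simp
    then show ?thesis
      using sl2_triple.e_power_nonzero[OF sl2 v(2)] weight root_space_H_funpow_cbracket[OF E v(1), of "nat (- z)"]
      by auto
  qed
  moreover have "\<beta> - n *\<^sub>R \<alpha> \<in> a"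
    using \<alpha>(1) \<beta>(1) subspace_a by (simp add: subspace_diff subspace_scale)
  ultimately show "\<beta> - n *\<^sub>R \<alpha> \<in> Sigma_tilde_H br \<theta>1 \<theta>2 a H"
    using Sigma_tilde_H_iff reflection_nonzero[OF \<alpha>(2) \<beta>(2)] by (simp add: n_def)
qed

end

theorem proposition4p13:
  fixes br :: "'g::euclidean_space \<Rightarrow> 'g \<Rightarrow> 'g"
    and \<theta>1 \<theta>2 :: "'g \<Rightarrow> 'g" and a :: "'g set" and H :: 'g and l :: nat
  assumes "semisimple_lie_algebra br"
    and "ad_invariant_inner br"
    and "involutive_automorphism br \<theta>1"
    and "involutive_automorphism br \<theta>2"
    and "l > 0"
    and "((\<theta>1 \<circ> \<theta>2) ^^ l) = id"
    and "maximal_abelian_subspace_in br (minus_space \<theta>1 \<inter> minus_space \<theta>2) a"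
    and "H \<in> a"
    and "Sigma_tilde_H br \<theta>1 \<theta>2 a H \<noteq> {}"
  shows "root_system_of (span (Sigma_tilde_H br \<theta>1 \<theta>2 a H)) (Sigma_tilde_H br \<theta>1 \<theta>2 a H)"
proof -
  interpret symmetric_triad br \<theta>1 \<theta>2 a
    using assms by unfold_locales (simp_all add: semisimple_lie_algebra_def)
  let ?R = "Sigma_tilde_H br \<theta>1 \<theta>2 a H"
  have "?R \<subseteq> {\<gamma> \<in> a. \<exists>v \<in> root_space br a \<gamma>. v \<noteq> 0}"
    by (auto simp: Sigma_tilde_H_iff root_space_H_def root_space_eps_def)
  then have "finite ?R"
    using finite_roots finite_subset by blast
  moreover have "0 \<notin> ?R"
    by (simp add: Sigma_tilde_H_iff)
  ultimately show ?thesis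
    unfolding root_system_of_def using root_reflection span_superset by blast
qed

end
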